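(* Let $A=[1,1,\dots,1]\in\mathbb R^{1\times N}$, $\vec w\in\mathbb R^N$ with $\sum_{i=1}^N w_i>0$, $b=A\vec w$, and let $\vec x$ be the minimizer of $\frac12\|\vec x-\vec w\|_2^2$ over $\vec x\in\mathbb R^N$ subject to $A\vec x=b$ and $x_i\ge0$ for all $i$. Assume at least one entry of $\vec w$ is strictly less than $0$. Then for every index $i$ with $w_i\le0$ we have $x_i=0$. *)

theory Defs
  imports "HOL-Analysis.Analysis"
begin

definition feasible :: "real \<Rightarrow> real ^ 'n \<Rightarrow> bool" where
  "feasible b x \<longleftrightarrow> (\<Sum>i\<in>UNIV. x $ i) = b \<and> (\<forall>i. x $ i \<ge> 0)"

definition is_minimizer :: "real ^ 'n \<Rightarrow> real \<Rightarrow> real ^ 'n \<Rightarrow> bool" where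
  "is_minimizer w b x \<longleftrightarrow> feasible b x \<and>
     (\<forall>y. feasible b y \<longrightarrow> (1/2) * (norm (x - w))\<^sup>2 \<le> (1/2) * (norm (y - w))\<^sup>2)"

end

theory Submission
  imports Defs
begin

text \<open>If \<open>x\<^sub>i > 0\<close> but \<open>x\<^sub>i - w\<^sub>i > x\<^sub>k - w\<^sub>k\<close>, shifting a little mass from
  coordinate \<open>i\<close> to coordinate \<open>k\<close> stays feasible and strictly decreases
  \<open>\<parallel>x - w\<parallel>\<close>. So on the support of the minimizer \<open>x\<^sub>i - w\<^sub>i\<close> is minimal among all
  \<open>x\<^sub>k - w\<^sub>k\<close>. When \<open>b = \<Sum> w\<close>, some \<open>k\<close> has \<open>x\<^sub>k \<le> w\<^sub>k\<close>, so every \<open>x\<^sub>i > 0\<close> satisfies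
  \<open>x\<^sub>i \<le> w\<^sub>i\<close>, which is impossible when \<open>w\<^sub>i \<le> 0\<close>.\<close>

lemma sum_eq_imp_exists_le:
  fixes f g :: "'a \<Rightarrow> 'b::{ordered_cancel_comm_monoid_add, linorder}"
  assumes "finite A" "A \<noteq> {}" "sum f A = sum g A"
  shows "\<exists>k\<in>A. f k \<le> g k"
proof (rule ccontr)
  assume "\<not> ?thesis"
  then have "sum g A < sum f A"
    using assms(1,2) by (intro sum_strict_mono) (auto simp: not_le)
  with assms(3) show False by simp
qed

lemma norm_diff_transfer_squared:
  fixes d :: "real ^ 'n"
  assumes "i \<noteq> k"
  shows "(norm (d - t *\<^sub>R (axis i 1 - axis k 1)))\<^sup>2
           = (norm d)\<^sup>2 - 2 * t * (d $ i - d $ k) + 2 * t\<^sup>2"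
proof -
  let ?v = "axis i 1 - axis k 1 :: real ^ 'n"
  have "d \<bullet> ?v = d $ i - d $ k"
    by (simp add: inner_diff_right inner_commute[of d] inner_axis')
  moreover have "?v \<bullet> ?v = 2"
    using assms by (simp add: inner_diff_left inner_diff_right inner_axis_axis)
  moreover have "(norm (d - t *\<^sub>R ?v))\<^sup>2 = d \<bullet> d - 2 * t * (d \<bullet> ?v) + t\<^sup>2 * (?v \<bullet> ?v)"
    unfolding power2_norm_eq_inner
    by (simp add: inner_diff_left inner_diff_right inner_commute power2_eq_square
        algebra_simps)
  ultimately show ?thesis
    by (simp add: power2_norm_eq_inner)
qed

lemma sum_axis: "(\<Sum>j\<in>UNIV. axis i c $ j) = c"
  by (simp add: axis_def)

lemma feasible_transfer:
  fixes x :: "real ^ 'n"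
  assumes "feasible b x" "i \<noteq> k" "0 \<le> t" "t \<le> x $ i"
  shows "feasible b (x - t *\<^sub>R (axis i 1 - axis k 1))"
proof -
  have "(\<Sum>j\<in>UNIV. (x - t *\<^sub>R (axis i 1 - axis k 1)) $ j)
          = (\<Sum>j\<in>UNIV. x $ j) - t * (\<Sum>j\<in>UNIV. (axis i 1 - axis k 1 :: real ^ 'n) $ j)"
    by (simp add: sum_distrib_left[symmetric] sum_subtractf)
  moreover have "0 \<le> (x - t *\<^sub>R (axis i 1 - axis k 1)) $ j" for j
  proof -
    have "0 \<le> x $ j"
      using assms(1) unfolding feasible_def by simp
    then show ?thesis
      using assms(2-4) by (auto simp: axis_def)
  qed
  ultimately show ?thesis
    using assms(1) unfolding feasible_def by (simp add: sum_subtractf sum_axis)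
qed

lemma minimizer_support_gap_le:
  assumes "is_minimizer w b x" "0 < x $ i"
  shows "x $ i - w $ i \<le> x $ k - w $ k"
proof (rule ccontr)
  assume gap: "\<not> ?thesis"
  then have "i \<noteq> k" by auto
  define t where "t = min (x $ i) (((x $ i - w $ i) - (x $ k - w $ k)) / 2)"
  define y where "y = x - t *\<^sub>R (axis i 1 - axis k 1)"
  have "t \<le> ((x $ i - w $ i) - (x $ k - w $ k)) / 2"
    unfolding t_def by (rule min.cobounded2)
  then have t: "0 < t" "t \<le> x $ i" "t < (x $ i - w $ i) - (x $ k - w $ k)"
    using gap assms(2) unfolding t_def by auto
  have "feasible b y"
    using assms(1) t \<open>i \<noteq> k\<close> unfolding y_def is_minimizer_def
    by (intro feasible_transfer) auto
  then have "(norm (x - w))\<^sup>2 \<le> (norm (y - w))\<^sup>2"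
    using assms(1) unfolding is_minimizer_def by auto
  also have "y - w = (x - w) - t *\<^sub>R (axis i 1 - axis k 1)"
    unfolding y_def by simp
  also have "(norm \<dots>)\<^sup>2 = (norm (x - w))\<^sup>2 - 2 * t * ((x $ i - w $ i) - (x $ k - w $ k) - t)"
    by (subst norm_diff_transfer_squared[OF \<open>i \<noteq> k\<close>]) (simp add: power2_eq_square algebra_simps)
  finally show False
    using t mult_pos_pos[of t "(x $ i - w $ i) - (x $ k - w $ k) - t"] by linarith
qed

theorem lemma2:
  fixes w x :: "real ^ 'n" and b :: real
  assumes "(\<Sum>i\<in>UNIV. w $ i) > 0"
    and "b = (\<Sum>i\<in>UNIV. w $ i)"
    and "is_minimizer w b x"
    and "\<exists>j. w $ j < 0"
  shows "\<forall>i. w $ i \<le> 0 \<longrightarrow> x $ i = 0"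
proof (intro allI impI)
  fix i
  assume "w $ i \<le> 0"
  have "feasible b x"
    using assms(3) unfolding is_minimizer_def by simp
  then have "x $ i \<ge> 0" and "(\<Sum>j\<in>UNIV. x $ j) = (\<Sum>j\<in>UNIV. w $ j)"
    using assms(2) unfolding feasible_def by auto
  then obtain k where "x $ k \<le> w $ k"
    using sum_eq_imp_exists_le[of UNIV "($) x" "($) w"] by auto
  show "x $ i = 0"
  proof (rule ccontr)
    assume "x $ i \<noteq> 0"
    with \<open>x $ i \<ge> 0\<close> have "x $ i - w $ i \<le> x $ k - w $ k"
      by (intro minimizer_support_gap_le[OF assms(3)]) simp
    with \<open>x $ k \<le> w $ k\<close> \<open>w $ i \<le> 0\<close> \<open>x $ i \<noteq> 0\<close> \<open>x $ i \<ge> 0\<close> show False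
      by linarith
  qed
qed

end
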